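(* Let $\varphi(\bm x,\bm y,\bm z)=\bigwedge_{i=1}^n \bm r_i^\top\bm x<\bm s_i^\top\bm y+\bm t_i^\top\bm z+h_i\wedge\bigwedge_{j=1}^m\bm u_j^\top\bm x=\bm v_j^\top\bm y+\bm w_j^\top\bm z+d_j$ as in the context, and let $\bm c\in\mathbb{R}^e$. Then $\exists^{\mathsf{ram}}\bm x,\bm y\colon\varphi(\bm x,\bm y,\bm c)$ holds over $\mathbb{R}$ if and only if there exists a $\bm c$-admissible profile $\bm p$ and a sequence compatible with $\bm p$ that satisfies the equality constraints for $\bm c$.
   Context: Here $\bm x,\bm y$ range over $\mathbb{R}^d$ and $\bm z$ over $\mathbb{R}^e$; $\bm r_i,\bm s_i,\bm u_j,\bm v_j\in\mathbb{Q}^d$, $\bm t_i,\bm w_j\in\mathbb{Q}^e$, $h_i,d_j\in\mathbb{Q}$. A profile is a tuple $\bm p=(\rho,\sigma,t_\rho,t_\sigma)$ of functions $\rho,\sigma\colon\{1,\dots,n\}\to\mathbb{R}\cup\{-\omega,\omega\}$ and $t_\rho,t_\sigma\colon\{1,\dots,n\}\to\{-\omega,-1,0,1,\omega\}$. For a sequence $(\bm a_k)_{k\ge1}$ in $\mathbb{R}^d$ let $\bm\rho_i=(\bm r_i^\top\bm a_k)_{k\ge1}$ and $\bm\sigma_i=(\bm s_i^\top\bm a_k)_{k\ge1}$. A sequence of pairwise distinct vectors is compatible with $\bm p$ if for every $i$ the following hold for $\bm\rho_i$ with respect to $(\rho(i),t_\rho(i))$, and likewise for $\bm\sigma_i$ with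 respect to $(\sigma(i),t_\sigma(i))$: type $0$ means the sequence is constantly equal to the value; type $1$ (resp. $-1$) means it is strictly increasing (resp. strictly decreasing) and converges from below (resp. above) to the real value; type $\omega$ (resp. $-\omega$) means it is strictly increasing and diverges to $\infty$ (resp. strictly decreasing and diverges to $-\infty$) and the value is $\omega$ (resp. $-\omega$). A profile is $\bm c$-admissible if for all $i$: (a) $\sigma(i)\neq-\omega$, and if $\rho(i)=\omega$ then $\sigma(i)=\omega$; (b) $\rho(i)<\sigma(i)+\bm t_i^\top\bm c+h_i$ whenever ($t_\rho(i)\in\{-1,0\}$ and $t_\sigma(i)\in\{0,1\}$) or ($t_\rho(i)=t_\sigma(i)=-1$); (c) $\rho(i)\le\sigma(i)+\bm t_i^\top\bm c+h_i$ whenever ($t_\rho(i)=0$ and $t_\sigma(i)=-1$) or $t_\rho(i)=1$. A sequence $(\bm a_k)$ satisfies the equality constraints for $\bm c$ if $\bm u_j^\top\bm a_k=\bm v_j^\top\bm a_\ell+\bm w_j^\top\bm c+d_j$ for all $j$ and all $k<\ell$. Ramsey quantifier: $\exists^{\mathsf{ram}}\bm x,\bm y\colon\varphi(\bm x,\bm y,\bm c)$ holds iff there is an infinite sequence of pairwise distinct $\bm a_i\in\mathbb{R}^d$ with $\varphi(\bm a_i,\bm a_j,\bm c)$ for all $i<j$. *)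

theory Defs
  imports "HOL-Analysis.Analysis" "HOL-Library.Extended_Real"
begin

datatype ptype = NegOmega | NegOne | Zero | One | Omega

definition seq_compatible :: "(nat \<Rightarrow> real) \<Rightarrow> ereal \<Rightarrow> ptype \<Rightarrow> bool" where
  "seq_compatible f v t =
    (case t of
       Zero \<Rightarrow> (\<forall>k. ereal (f k) = v)
     | One \<Rightarrow> (\<exists>a. v = ereal a \<and> (\<forall>k l. k < l \<longrightarrow> f k < f l) \<and> f \<longlonglongrightarrow> a)
     | NegOne \<Rightarrow> (\<exists>a. v = ereal a \<and> (\<forall>k l. k < l \<longrightarrow> f l < f k) \<and> f \<longlonglongrightarrow> a)
     | Omega \<Rightarrow> (v = \<infinity> \<and> (\<forall>k l. k < l \<longrightarrow> f k < f l) \<and> filterlim f at_top sequentially)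
     | NegOmega \<Rightarrow> (v = -\<infinity> \<and> (\<forall>k l. k < l \<longrightarrow> f l < f k) \<and> filterlim f at_bot sequentially))"

definition compatible ::
  "nat \<Rightarrow> (nat \<Rightarrow> real^'d) \<Rightarrow> (nat \<Rightarrow> real^'d)
   \<Rightarrow> (nat \<Rightarrow> ereal) \<Rightarrow> (nat \<Rightarrow> ereal) \<Rightarrow> (nat \<Rightarrow> ptype) \<Rightarrow> (nat \<Rightarrow> ptype)
   \<Rightarrow> (nat \<Rightarrow> real^'d) \<Rightarrow> bool" where
  "compatible n r s \<rho> \<sigma> t\<rho> t\<sigma> a =
    (inj a \<and> (\<forall>i\<in>{1..n}.
        seq_compatible (\<lambda>k. r i \<bullet> a k) (\<rho> i) (t\<rho> i) \<and>
        seq_compatible (\<lambda>k. s i \<bullet> a k) (\<sigma> i) (t\<sigma> i)))"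

definition admissible ::
  "nat \<Rightarrow> (nat \<Rightarrow> real^'e) \<Rightarrow> (nat \<Rightarrow> real) \<Rightarrow> real^'e
   \<Rightarrow> (nat \<Rightarrow> ereal) \<Rightarrow> (nat \<Rightarrow> ereal) \<Rightarrow> (nat \<Rightarrow> ptype) \<Rightarrow> (nat \<Rightarrow> ptype) \<Rightarrow> bool" where
  "admissible n t h c \<rho> \<sigma> t\<rho> t\<sigma> =
    (\<forall>i\<in>{1..n}.
       (\<sigma> i \<noteq> -\<infinity> \<and> (\<rho> i = \<infinity> \<longrightarrow> \<sigma> i = \<infinity>)) \<and>
       (((t\<rho> i \<in> {NegOne, Zero} \<and> t\<sigma> i \<in> {Zero, One}) \<or> (t\<rho> i = NegOne \<and> t\<sigma> i = NegOne))
          \<longrightarrow> \<rho> i < \<sigma> i + ereal (t i \<bullet> c + h i)) \<and>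
       (((t\<rho> i = Zero \<and> t\<sigma> i = NegOne) \<or> t\<rho> i = One)
          \<longrightarrow> \<rho> i \<le> \<sigma> i + ereal (t i \<bullet> c + h i)))"

definition eq_constraints ::
  "nat \<Rightarrow> (nat \<Rightarrow> real^'d) \<Rightarrow> (nat \<Rightarrow> real^'d) \<Rightarrow> (nat \<Rightarrow> real^'e) \<Rightarrow> (nat \<Rightarrow> real)
   \<Rightarrow> real^'e \<Rightarrow> (nat \<Rightarrow> real^'d) \<Rightarrow> bool" where
  "eq_constraints m u v w d c a =
    (\<forall>j\<in>{1..m}. \<forall>k l. k < l \<longrightarrow> u j \<bullet> a k = v j \<bullet> a l + w j \<bullet> c + d j)"

definition phi ::
  "nat \<Rightarrow> (nat \<Rightarrow> real^'d) \<Rightarrow> (nat \<Rightarrow> real^'d) \<Rightarrow> (nat \<Rightarrow> real^'e) \<Rightarrow> (nat \<Rightarrow> real)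
   \<Rightarrow> nat \<Rightarrow> (nat \<Rightarrow> real^'d) \<Rightarrow> (nat \<Rightarrow> real^'d) \<Rightarrow> (nat \<Rightarrow> real^'e) \<Rightarrow> (nat \<Rightarrow> real)
   \<Rightarrow> real^'d \<Rightarrow> real^'d \<Rightarrow> real^'e \<Rightarrow> bool" where
  "phi n r s t h m u v w d x y z =
    ((\<forall>i\<in>{1..n}. r i \<bullet> x < s i \<bullet> y + t i \<bullet> z + h i) \<and>
     (\<forall>j\<in>{1..m}. u j \<bullet> x = v j \<bullet> y + w j \<bullet> z + d j))"

definition ramsey_exists :: "(real^'d \<Rightarrow> real^'d \<Rightarrow> bool) \<Rightarrow> bool" where
  "ramsey_exists P = (\<exists>a :: nat \<Rightarrow> real^'d. inj a \<and> (\<forall>i j. i < j \<longrightarrow> P (a i) (a j)))"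

end

theory Submission
  imports Defs
begin

text \<open>
  Along a witness sequence every projection \<open>r\<^sub>i\<^sup>\<top>a\<^sub>k\<close>, \<open>s\<^sub>i\<^sup>\<top>a\<^sub>k\<close> has a monotone
  subsequence, which is eventually constant, strictly monotone and convergent, or strictly
  monotone and divergent; refining finitely often yields a subsequence compatible with a
  profile, and letting \<open>l \<rightarrow> \<infinity>\<close> and then \<open>k \<rightarrow> \<infinity>\<close> in
  \<open>r\<^sub>i\<^sup>\<top>a\<^sub>k < s\<^sub>i\<^sup>\<top>a\<^sub>l + t\<^sub>i\<^sup>\<top>c + h\<^sub>i\<close> gives admissibility.
  Conversely, admissibility guarantees that for all large \<open>k\<close> the strict inequality holds
  for all large \<open>l\<close>; a diagonal choice of indices then satisfies it for every pair, and
  equality constraints survive passing to subsequences.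
\<close>

lemma seq_compatible_tendsto:
  assumes "seq_compatible f v t"
  shows "((\<lambda>k. ereal (f k)) \<longlongrightarrow> v) sequentially"
proof (cases t)
  case Zero
  then have "(\<lambda>k. ereal (f k)) = (\<lambda>k. v)" using assms by (auto simp: seq_compatible_def)
  then show ?thesis by simp
qed (use assms in \<open>auto simp: seq_compatible_def tendsto_MInfty filterlim_at_bot_dense
      tendsto_PInfty_eq_at_top\<close>)

lemma seq_compatible_subseq:
  assumes "seq_compatible f v t" and "strict_mono \<psi>"
  shows "seq_compatible (\<lambda>k. f (\<psi> k)) v t"
proof -
  have "X \<longlonglongrightarrow> a \<Longrightarrow> (\<lambda>k. X (\<psi> k)) \<longlonglongrightarrow> a" for X and a :: real
    using LIMSEQ_subseq_LIMSEQ[OF _ assms(2)] by (simp add: o_def)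
  moreover have "filterlim X F sequentially \<Longrightarrow> filterlim (\<lambda>k. X (\<psi> k)) F sequentially"
    for X :: "nat \<Rightarrow> real" and F
    using filterlim_compose[OF _ filterlim_subseq[OF assms(2)]] by blast
  ultimately show ?thesis
    using assms by (cases t) (auto simp: seq_compatible_def strict_mono_less)
qed

lemma seq_compatible_One_less:
  assumes "seq_compatible f v One"
  shows "ereal (f k) < v"
proof -
  obtain b where b: "v = ereal b" "\<forall>k l. k < l \<longrightarrow> f k < f l" "f \<longlonglongrightarrow> b"
    using assms by (auto simp: seq_compatible_def)
  have "incseq f" using b(2) by (auto simp: incseq_def le_less)
  then have "f (Suc k) \<le> b" using incseq_le b(3) by blast
  moreover have "f k < f (Suc k)" using b(2) by simp
  ultimately show ?thesis using b(1) by simp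
qed

lemma seq_compatible_NegOne_greater:
  assumes "seq_compatible f v NegOne"
  shows "v < ereal (f k)"
proof -
  obtain b where b: "v = ereal b" "\<forall>k l. k < l \<longrightarrow> f l < f k" "f \<longlonglongrightarrow> b"
    using assms by (auto simp: seq_compatible_def)
  have "decseq f" using b(2) by (intro decseq_SucI) (simp add: less_imp_le)
  then have "b \<le> f (Suc k)" using decseq_ge b(3) by blast
  moreover have "f (Suc k) < f k" using b(2) by simp
  ultimately show ?thesis using b(1) by simp
qed

lemma seq_compatible_finite_value:
  "seq_compatible f v t \<Longrightarrow> t \<in> {Zero, One, NegOne} \<Longrightarrow> \<exists>b. v = ereal b"
  by (cases t) (auto simp: seq_compatible_def)

lemma seq_compatible_uminus:
  assumes "seq_compatible f v t"
  shows "\<exists>t'. seq_compatible (\<lambda>k. - f k) (- v) t'"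
proof (cases t)
  case Zero
  then have "seq_compatible (\<lambda>k. - f k) (- v) Zero"
    using assms by (auto simp: seq_compatible_def)
  then show ?thesis ..
next
  case One
  then have "seq_compatible (\<lambda>k. - f k) (- v) NegOne"
    using assms by (auto simp: seq_compatible_def intro: tendsto_minus)
  then show ?thesis ..
next
  case NegOne
  then have "seq_compatible (\<lambda>k. - f k) (- v) One"
    using assms by (auto simp: seq_compatible_def intro: tendsto_minus)
  then show ?thesis ..
next
  case Omega
  then have "seq_compatible (\<lambda>k. - f k) (- v) NegOmega"
    using assms by (auto simp: seq_compatible_def filterlim_uminus_at_top)
  then show ?thesis ..
next
  case NegOmega
  then have "seq_compatible (\<lambda>k. - f k) (- v) Omega"
    using assms by (auto simp: seq_compatible_def filterlim_uminus_at_bot)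
  then show ?thesis ..
qed

lemma strict_mono_imp_seq_compatible:
  fixes y :: "nat \<Rightarrow> real"
  assumes "strict_mono y"
  shows "\<exists>v t. seq_compatible y v t"
proof -
  have "incseq (\<lambda>k. ereal (y k))"
    using assms by (auto simp: incseq_def strict_mono_less_eq)
  then have lim: "(\<lambda>k. ereal (y k)) \<longlonglongrightarrow> (SUP k. ereal (y k))" by (rule LIMSEQ_SUP)
  have "ereal (y 0) \<le> (SUP k. ereal (y k))" by (rule SUP_upper) simp
  then show ?thesis
  proof (cases "SUP k. ereal (y k)")
    case (real a)
    then have "seq_compatible y (ereal a) One"
      using lim assms by (auto simp: seq_compatible_def strict_mono_less)
    then show ?thesis by blast
  next
    case PInf
    then have "seq_compatible y \<infinity> Omega"
      using lim assms by (auto simp: seq_compatible_def strict_mono_less tendsto_PInfty_eq_at_top)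
    then show ?thesis by blast
  qed simp
qed

lemma incseq_has_compatible_subseq:
  fixes x :: "nat \<Rightarrow> real"
  assumes "incseq x"
  shows "\<exists>\<psi> v t. strict_mono \<psi> \<and> seq_compatible (\<lambda>k. x (\<psi> k)) v t"
proof (cases "\<exists>N. \<forall>n\<ge>N. x n = x N")
  case True
  then obtain N where N: "\<And>n. N \<le> n \<Longrightarrow> x n = x N" by blast
  have "seq_compatible (\<lambda>k. x (N + k)) (ereal (x N)) Zero"
    unfolding seq_compatible_def using N[of "N + _"] by simp
  moreover have "strict_mono (\<lambda>k. N + k)" by (simp add: strict_mono_def)
  ultimately show ?thesis by blast
next
  case False
  have "\<exists>n. N < n \<and> x N < x n" for N
    using False assms by (metis dual_order.order_iff_strict incseq_def)
  then obtain g where g: "\<And>N. N < g N \<and> x N < x (g N)" by metis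
  define \<psi> where "\<psi> k = (g ^^ k) 0" for k
  have "strict_mono \<psi>" and "strict_mono (\<lambda>k. x (\<psi> k))"
    unfolding strict_mono_Suc_iff \<psi>_def using g by simp_all
  then show ?thesis using strict_mono_imp_seq_compatible by blast
qed

lemma has_compatible_subseq:
  fixes x :: "nat \<Rightarrow> real"
  shows "\<exists>\<psi> v t. strict_mono \<psi> \<and> seq_compatible (\<lambda>k. x (\<psi> k)) v t"
proof -
  obtain g where g: "strict_mono g" "monoseq (\<lambda>n. x (g n))" using seq_monosub by blast
  show ?thesis
  proof (cases "incseq (\<lambda>n. x (g n))")
    case True
    then obtain \<psi> v t where \<psi>: "strict_mono \<psi>" and "seq_compatible (\<lambda>k. x (g (\<psi> k))) v t"
      using incseq_has_compatible_subseq[of "\<lambda>n. x (g n)"] by blast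
    then show ?thesis using strict_mono_compose[OF g(1) \<psi>] by blast
  next
    case False
    then have "decseq (\<lambda>n. x (g n))" using g(2) monoseq_iff by blast
    then have "incseq (\<lambda>n. - x (g n))" by (simp add: decseq_def incseq_def monotone_on_def)
    then obtain \<psi> v t where \<psi>: "strict_mono \<psi>" and "seq_compatible (\<lambda>k. - x (g (\<psi> k))) v t"
      using incseq_has_compatible_subseq[of "\<lambda>n. - x (g n)"] by blast
    then obtain t' where "seq_compatible (\<lambda>k. x (g (\<psi> k))) (- v) t'"
      using seq_compatible_uminus by fastforce
    then show ?thesis using strict_mono_compose[OF g(1) \<psi>] by blast
  qed
qed

lemma has_compatible_subseq_finite:
  fixes F :: "'i \<Rightarrow> nat \<Rightarrow> real"
  assumes "finite I"
  shows "\<exists>\<psi> v t. strict_mono \<psi> \<and> (\<forall>i\<in>I. seq_compatible (\<lambda>k. F i (\<psi> k)) (v i) (t i))"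
  using assms
proof (induction rule: finite_induct)
  case empty
  have "strict_mono (\<lambda>k::nat. k)" by (simp add: strict_mono_def)
  then show ?case by blast
next
  case (insert j I)
  then obtain \<psi> v t where \<psi>: "strict_mono \<psi>"
    and I: "\<forall>i\<in>I. seq_compatible (\<lambda>k. F i (\<psi> k)) (v i) (t i)" by blast
  obtain \<theta> v' t' where \<theta>: "strict_mono \<theta>" and j: "seq_compatible (\<lambda>k. F j (\<psi> (\<theta> k))) v' t'"
    using has_compatible_subseq[of "\<lambda>k. F j (\<psi> k)"] by blast
  have "\<forall>i\<in>insert j I. seq_compatible (\<lambda>k. F i (\<psi> (\<theta> k))) ((v(j := v')) i) ((t(j := t')) i)"
    using I j seq_compatible_subseq[OF _ \<theta>] insert.hyps(2) by auto
  then show ?case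
    by (intro exI[of _ "\<lambda>k. \<psi> (\<theta> k)"] exI conjI strict_mono_compose[OF \<psi> \<theta>])
qed

lemma strict_mono_subseq_pairwise:
  assumes "\<forall>\<^sub>F k in sequentially. \<forall>\<^sub>F l in sequentially. Q k l"
  shows "\<exists>\<phi> :: nat \<Rightarrow> nat. strict_mono \<phi> \<and> (\<forall>i j. i < j \<longrightarrow> Q (\<phi> i) (\<phi> j))"
proof -
  obtain K where "\<forall>k\<ge>K. \<forall>\<^sub>F l in sequentially. Q k l"
    using iffD1[OF eventually_sequentially assms] by (elim exE)
  then have K: "\<And>k. K \<le> k \<Longrightarrow> \<forall>\<^sub>F l in sequentially. Q k l" by blast
  have ev: "\<forall>\<^sub>F l in sequentially. m < l \<and> (\<forall>k\<in>{K..m}. Q k l)" for m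
    using K by (intro eventually_conj eventually_gt_at_top eventually_ball_finite) auto
  have "\<forall>m. \<exists>l. m < l \<and> (\<forall>k\<in>{K..m}. Q k l)"
    using eventually_happens'[OF sequentially_bot ev] by blast
  then obtain g where "\<forall>m. m < g m \<and> (\<forall>k\<in>{K..m}. Q k (g m))" by (rule choice[THEN exE])
  then have g: "\<And>m. m < g m" "\<And>m k. k \<in> {K..m} \<Longrightarrow> Q k (g m)" by blast+
  define \<phi> where "\<phi> j = (g ^^ j) K" for j
  have \<phi>_Suc: "\<phi> (Suc j) = g (\<phi> j)" for j by (simp add: \<phi>_def)
  have \<phi>: "strict_mono \<phi>" unfolding strict_mono_Suc_iff \<phi>_Suc using g(1) by simp
  have pairs: "Q (\<phi> i) (\<phi> j)" if "i < j" for i j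
  proof -
    obtain p where p: "j = Suc p" "i \<le> p" using \<open>i < j\<close> by (cases j) auto
    have "\<phi> 0 \<le> \<phi> i" "\<phi> i \<le> \<phi> p" using \<phi> p(2) by (simp_all add: strict_mono_less_eq)
    then have "\<phi> i \<in> {K..\<phi> p}" by (simp add: \<phi>_def)
    then show ?thesis unfolding p(1) \<phi>_Suc by (rule g(2))
  qed
  show ?thesis using \<phi> pairs by blast
qed

definition admissible_entry :: "ereal \<Rightarrow> ereal \<Rightarrow> ptype \<Rightarrow> ptype \<Rightarrow> real \<Rightarrow> bool" where
  "admissible_entry \<rho> \<sigma> t\<rho> t\<sigma> H \<longleftrightarrow>
     (\<sigma> \<noteq> -\<infinity> \<and> (\<rho> = \<infinity> \<longrightarrow> \<sigma> = \<infinity>)) \<and>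
     (((t\<rho> \<in> {NegOne, Zero} \<and> t\<sigma> \<in> {Zero, One}) \<or> (t\<rho> = NegOne \<and> t\<sigma> = NegOne))
        \<longrightarrow> \<rho> < \<sigma> + ereal H) \<and>
     (((t\<rho> = Zero \<and> t\<sigma> = NegOne) \<or> t\<rho> = One) \<longrightarrow> \<rho> \<le> \<sigma> + ereal H)"

lemma admissible_iff_entries:
  "admissible n t h c \<rho> \<sigma> t\<rho> t\<sigma> \<longleftrightarrow>
     (\<forall>i\<in>{1..n}. admissible_entry (\<rho> i) (\<sigma> i) (t\<rho> i) (t\<sigma> i) (t i \<bullet> c + h i))"
  by (simp add: admissible_def admissible_entry_def)

lemma admissible_entry_if_pairwise_less:
  assumes f: "seq_compatible f \<rho> t\<rho>" and g: "seq_compatible g \<sigma> t\<sigma>"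
    and less: "\<And>k l. k < l \<Longrightarrow> f k < g l + H"
  shows "admissible_entry \<rho> \<sigma> t\<rho> t\<sigma> H"
proof -
  have "((\<lambda>l. ereal (g l) + ereal H) \<longlongrightarrow> \<sigma> + ereal H) sequentially"
    by (rule tendsto_add_ereal_general) (auto intro: seq_compatible_tendsto[OF g])
  then have lim_g: "((\<lambda>l. ereal (g l + H)) \<longlongrightarrow> \<sigma> + ereal H) sequentially" by simp
  have upper: "ereal (f k) \<le> \<sigma> + ereal H" for k
  proof (rule LIMSEQ_le_const[OF lim_g])
    show "\<exists>N. \<forall>l\<ge>N. ereal (f k) \<le> ereal (g l + H)"
      using less by (intro exI[of _ "Suc k"]) (auto intro: less_imp_le)
  qed
  have \<rho>_le: "\<rho> \<le> \<sigma> + ereal H"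
    by (rule LIMSEQ_le_const2[OF seq_compatible_tendsto[OF f]]) (use upper in blast)
  have \<sigma>_not_MInf: "\<sigma> \<noteq> -\<infinity>" using upper[of 0] by auto
  have strict: "\<rho> < \<sigma> + ereal H" if "t\<rho> = NegOne \<or> (t\<rho> = Zero \<and> t\<sigma> \<in> {Zero, One})"
    using that
  proof
    assume "t\<rho> = NegOne"
    then have "\<rho> < ereal (f 0)" using f seq_compatible_NegOne_greater by blast
    then show ?thesis using upper[of 0] by (rule less_le_trans)
  next
    assume z: "t\<rho> = Zero \<and> t\<sigma> \<in> {Zero, One}"
    then have "\<rho> = ereal (f 0)" using f by (simp add: seq_compatible_def)
    moreover have "ereal (g 1) \<le> \<sigma>"
      using z g seq_compatible_One_less[of g \<sigma> 1] by (auto simp: seq_compatible_def less_imp_le)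
    moreover obtain b where "\<sigma> = ereal b" using z g seq_compatible_finite_value by blast
    ultimately show ?thesis using less[of 0 1] by simp
  qed
  show ?thesis
    unfolding admissible_entry_def using \<rho>_le \<sigma>_not_MInf strict by (cases \<sigma>) auto
qed

lemma eventually_less_seq_compatible:
  assumes g: "seq_compatible g \<sigma> t\<sigma>" and "t\<sigma> \<noteq> NegOmega"
    and less: "t\<sigma> \<in> {Zero, One} \<Longrightarrow> ereal x < \<sigma> + ereal H"
    and le: "t\<sigma> = NegOne \<Longrightarrow> ereal x \<le> \<sigma> + ereal H"
  shows "\<forall>\<^sub>F l in sequentially. x < g l + H"
proof (cases t\<sigma>)
  case Zero
  then have g_const: "\<sigma> = ereal (g l)" for l using g by (simp add: seq_compatible_def)
  have "x < g l + H" for l using less[unfolded g_const[of l]] Zero by simp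
  then show ?thesis by simp
next
  case One
  then obtain b where b: "\<sigma> = ereal b" "g \<longlonglongrightarrow> b" using g by (auto simp: seq_compatible_def)
  then have "x - H < b" using less One by simp
  from order_tendstoD(1)[OF b(2) this] show ?thesis by (rule eventually_mono) simp
next
  case NegOne
  then obtain b where b: "\<sigma> = ereal b" using g by (auto simp: seq_compatible_def)
  have b_less: "b < g l" for l using g NegOne seq_compatible_NegOne_greater b by fastforce
  have "x \<le> b + H" using le NegOne b by simp
  then have "x < g l + H" for l using b_less[of l] by linarith
  then show ?thesis by simp
next
  case Omega
  then have "filterlim g at_top sequentially" using g by (simp add: seq_compatible_def)
  then have "\<forall>\<^sub>F l in sequentially. x - H < g l" by (simp add: filterlim_at_top_dense)
  then show ?thesis by (rule eventually_mono) simp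
qed (use assms in simp)

lemma eventually_less_if_admissible_entry:
  assumes f: "seq_compatible f \<rho> t\<rho>" and g: "seq_compatible g \<sigma> t\<sigma>"
    and adm: "admissible_entry \<rho> \<sigma> t\<rho> t\<sigma> H"
  shows "\<forall>\<^sub>F k in sequentially. \<forall>\<^sub>F l in sequentially. f k < g l + H"
proof -
  define below where "below k \<longleftrightarrow> (t\<sigma> \<in> {Zero, One} \<longrightarrow> ereal (f k) < \<sigma> + ereal H) \<and>
      (t\<sigma> = NegOne \<longrightarrow> ereal (f k) \<le> \<sigma> + ereal H)" for k
  have t\<sigma>: "t\<sigma> \<noteq> NegOmega"
  proof
    assume "t\<sigma> = NegOmega"
    then have "\<sigma> = -\<infinity>" using g by (simp add: seq_compatible_def)
    then show False using adm by (simp add: admissible_entry_def)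
  qed
  have "\<forall>\<^sub>F k in sequentially. below k"
  proof (cases "\<rho> < \<sigma> + ereal H")
    case True
    from order_tendstoD(2)[OF seq_compatible_tendsto[OF f] True] show ?thesis
      by (rule eventually_mono) (auto simp: below_def)
  next
    case False
    have "below k" for k
    proof (cases t\<rho>)
      case NegOmega
      then have "\<rho> = -\<infinity>" using f by (simp add: seq_compatible_def)
      with False adm show ?thesis by (cases \<sigma>) (auto simp: admissible_entry_def)
    next
      case NegOne
      then have "t\<sigma> = Omega" using t\<sigma> adm False by (cases t\<sigma>) (auto simp: admissible_entry_def)
      then show ?thesis by (simp add: below_def)
    next
      case Zero
      then have "ereal (f k) = \<rho>" using f by (simp add: seq_compatible_def)
      then show ?thesis using adm False Zero by (auto simp: below_def admissible_entry_def)
    next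
      case One
      then have "ereal (f k) < \<rho>" using f seq_compatible_One_less by blast
      moreover have "\<rho> \<le> \<sigma> + ereal H" using adm One by (simp add: admissible_entry_def)
      ultimately show ?thesis by (auto simp: below_def)
    next
      case Omega
      then have "\<rho> = \<infinity>" using f by (simp add: seq_compatible_def)
      then have "\<sigma> = \<infinity>" using adm by (simp add: admissible_entry_def)
      then show ?thesis by (simp add: below_def)
    qed
    then show ?thesis by simp
  qed
  then show ?thesis
  proof (rule eventually_mono)
    show "\<forall>\<^sub>F l in sequentially. f k < g l + H" if "below k" for k
      using that by (intro eventually_less_seq_compatible[OF g t\<sigma>]) (auto simp: below_def)
  qed
qed

lemma profile_of_ramsey_sequence:
  fixes a :: "nat \<Rightarrow> real^'d"
  assumes inj: "inj a" and P: "\<And>k l. k < l \<Longrightarrow> phi n r s t h m u v w d (a k) (a l) c"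
  shows "\<exists>\<rho> \<sigma> t\<rho> t\<sigma>. admissible n t h c \<rho> \<sigma> t\<rho> t\<sigma> \<and>
           (\<exists>b. compatible n r s \<rho> \<sigma> t\<rho> t\<sigma> b \<and> eq_constraints m u v w d c b)"
proof -
  obtain \<phi> \<rho> t\<rho> where \<phi>: "strict_mono \<phi>"
    and \<rho>: "\<forall>i\<in>{1..n}. seq_compatible (\<lambda>k. r i \<bullet> a (\<phi> k)) (\<rho> i) (t\<rho> i)"
    using has_compatible_subseq_finite[of "{1..n}" "\<lambda>i k. r i \<bullet> a k"] by blast
  obtain \<psi> \<sigma> t\<sigma> where \<psi>: "strict_mono \<psi>"
    and \<sigma>: "\<forall>i\<in>{1..n}. seq_compatible (\<lambda>k. s i \<bullet> a (\<phi> (\<psi> k))) (\<sigma> i) (t\<sigma> i)"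
    using has_compatible_subseq_finite[of "{1..n}" "\<lambda>i k. s i \<bullet> a (\<phi> k)"] by blast
  define b where "b k = a (\<phi> (\<psi> k))" for k
  have mono: "strict_mono (\<lambda>k. \<phi> (\<psi> k))" using \<phi> \<psi> by (rule strict_mono_compose)
  have Pb: "phi n r s t h m u v w d (b k) (b l) c" if "k < l" for k l
    using P[OF strict_monoD[OF mono that]] by (simp add: b_def)
  have \<rho>b: "seq_compatible (\<lambda>k. r i \<bullet> b k) (\<rho> i) (t\<rho> i)" if "i \<in> {1..n}" for i
    using seq_compatible_subseq[OF bspec[OF \<rho> that] \<psi>] by (simp add: b_def)
  have \<sigma>b: "seq_compatible (\<lambda>k. s i \<bullet> b k) (\<sigma> i) (t\<sigma> i)" if "i \<in> {1..n}" for i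
    using \<sigma> that by (simp add: b_def)
  have "inj b"
    using inj_compose[OF inj strict_mono_imp_inj_on[OF mono]] by (simp add: b_def[abs_def] o_def)
  then have "compatible n r s \<rho> \<sigma> t\<rho> t\<sigma> b" using \<rho>b \<sigma>b by (simp add: compatible_def)
  moreover have "eq_constraints m u v w d c b" using Pb by (simp add: eq_constraints_def phi_def)
  moreover have "admissible n t h c \<rho> \<sigma> t\<rho> t\<sigma>"
    unfolding admissible_iff_entries
  proof
    fix i assume i: "i \<in> {1..n}"
    have "r i \<bullet> b k < s i \<bullet> b l + (t i \<bullet> c + h i)" if "k < l" for k l
      using Pb[OF that] i by (simp add: phi_def add.assoc)
    then show "admissible_entry (\<rho> i) (\<sigma> i) (t\<rho> i) (t\<sigma> i) (t i \<bullet> c + h i)"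
      by (rule admissible_entry_if_pairwise_less[OF \<rho>b[OF i] \<sigma>b[OF i]])
  qed
  ultimately show ?thesis by blast
qed

lemma ramsey_sequence_of_profile:
  assumes adm: "admissible n t h c \<rho> \<sigma> t\<rho> t\<sigma>" and comp: "compatible n r s \<rho> \<sigma> t\<rho> t\<sigma> a"
    and eq: "eq_constraints m u v w d c a"
  shows "ramsey_exists (\<lambda>x y. phi n r s t h m u v w d x y c)"
proof -
  have "\<forall>\<^sub>F k in sequentially. \<forall>\<^sub>F l in sequentially. r i \<bullet> a k < s i \<bullet> a l + (t i \<bullet> c + h i)"
    if "i \<in> {1..n}" for i
  proof -
    have "seq_compatible (\<lambda>k. r i \<bullet> a k) (\<rho> i) (t\<rho> i)"
      and "seq_compatible (\<lambda>k. s i \<bullet> a k) (\<sigma> i) (t\<sigma> i)"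
      using comp that by (simp_all add: compatible_def)
    moreover have "admissible_entry (\<rho> i) (\<sigma> i) (t\<rho> i) (t\<sigma> i) (t i \<bullet> c + h i)"
      using adm that by (simp add: admissible_iff_entries)
    ultimately show ?thesis by (rule eventually_less_if_admissible_entry)
  qed
  then have "\<forall>\<^sub>F k in sequentially. \<forall>i\<in>{1..n}. \<forall>\<^sub>F l in sequentially.
      r i \<bullet> a k < s i \<bullet> a l + (t i \<bullet> c + h i)"
    by (intro eventually_ball_finite) auto
  then have "\<forall>\<^sub>F k in sequentially. \<forall>\<^sub>F l in sequentially.
      \<forall>i\<in>{1..n}. r i \<bullet> a k < s i \<bullet> a l + (t i \<bullet> c + h i)"
    by (rule eventually_mono) (rule eventually_ball_finite, simp_all)
  then obtain \<phi> :: "nat \<Rightarrow> nat" where \<phi>: "strict_mono \<phi>"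
    and less: "\<forall>k l. k < l \<longrightarrow> (\<forall>i\<in>{1..n}. r i \<bullet> a (\<phi> k) < s i \<bullet> a (\<phi> l) + (t i \<bullet> c + h i))"
    by (elim strict_mono_subseq_pairwise[THEN exE]) blast
  have "inj a" using comp by (simp add: compatible_def)
  then have "inj (\<lambda>k. a (\<phi> k))"
    using inj_compose[OF _ strict_mono_imp_inj_on[OF \<phi>]] by (simp add: o_def)
  moreover have "phi n r s t h m u v w d (a (\<phi> k)) (a (\<phi> l)) c" if "k < l" for k l
    using less eq \<phi> that by (simp add: phi_def eq_constraints_def strict_mono_less add.assoc)
  ultimately show ?thesis unfolding ramsey_exists_def by blast
qed

theorem mainTheorem11:
  fixes n m :: nat
    and r s u v :: "nat \<Rightarrow> real^'d"
    and t w :: "nat \<Rightarrow> real^'e"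
    and h d :: "nat \<Rightarrow> real"
    and c :: "real^'e"
  assumes "\<forall>i\<in>{1..n}. (\<forall>k. r i $ k \<in> \<rat> \<and> s i $ k \<in> \<rat>) \<and> (\<forall>k. t i $ k \<in> \<rat>) \<and> h i \<in> \<rat>"
    and "\<forall>j\<in>{1..m}. (\<forall>k. u j $ k \<in> \<rat> \<and> v j $ k \<in> \<rat>) \<and> (\<forall>k. w j $ k \<in> \<rat>) \<and> d j \<in> \<rat>"
  shows "ramsey_exists (\<lambda>x y. phi n r s t h m u v w d x y c) \<longleftrightarrow>
    (\<exists>\<rho> \<sigma> t\<rho> t\<sigma>. admissible n t h c \<rho> \<sigma> t\<rho> t\<sigma> \<and>
       (\<exists>a. compatible n r s \<rho> \<sigma> t\<rho> t\<sigma> a \<and> eq_constraints m u v w d c a))"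
  \<comment> \<open>Rationality of the coefficients plays no role over \<open>\<real>\<close>.\<close>
proof
  assume "ramsey_exists (\<lambda>x y. phi n r s t h m u v w d x y c)"
  then obtain a :: "nat \<Rightarrow> real^'d"
    where "inj a" and "\<And>k l. k < l \<Longrightarrow> phi n r s t h m u v w d (a k) (a l) c"
    unfolding ramsey_exists_def by blast
  then show "\<exists>\<rho> \<sigma> t\<rho> t\<sigma>. admissible n t h c \<rho> \<sigma> t\<rho> t\<sigma> \<and>
      (\<exists>a. compatible n r s \<rho> \<sigma> t\<rho> t\<sigma> a \<and> eq_constraints m u v w d c a)"
    by (rule profile_of_ramsey_sequence)
next
  assume "\<exists>\<rho> \<sigma> t\<rho> t\<sigma>. admissible n t h c \<rho> \<sigma> t\<rho> t\<sigma> \<and>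
      (\<exists>a. compatible n r s \<rho> \<sigma> t\<rho> t\<sigma> a \<and> eq_constraints m u v w d c a)"
  then show "ramsey_exists (\<lambda>x y. phi n r s t h m u v w d x y c)"
    using ramsey_sequence_of_profile by blast
qed

end
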